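(* Let $K_{2,m_1,m_2}=(Q_0,Q_1)$ be the generalized 2-Kronecker quiver having at least one source and at least one sink. Let $\beta=(n,\dots,n)\in\mathbb{Z}_{\ge0}^{Q_0}$, impose the complete standard filtration at each vertex, and let $\mathbb{U}_\beta=U^{Q_0}$. Then $\mathbb{C}[F^{\bullet}Rep(K_{2,m_1,m_2},\beta)]^{\mathbb{U}_\beta}=\mathbb{C}[\mathfrak{t}^{\oplus Q_1}]$.
   Context: $K_{2,m_1,m_2}$ is a quiver whose underlying graph consists of two vertices $u,v$ joined by two disjoint paths, one passing through $m_1$ intermediate vertices and the other through $m_2$ intermediate vertices (so it is a cycle), with the arrows oriented arbitrarily. At each vertex put $\mathbb{C}^n$ with the flag $0\subset\mathbb{C}^1\subset\cdots\subset\mathbb{C}^n$ of standard coordinate subspaces; $F^{\bullet}Rep(K_{2,m_1,m_2},\beta)=\mathfrak{b}^{\oplus Q_1}$ consists of tuples $(A_a)$ of upper triangular $n\times n$ matrices. $U$ is the group of upper unitriangular $n\times n$ matrices, acting by $(u_i)\cdot(A_a)=(u_{h(a)}A_au_{t(a)}^{-1})$ with $h,t$ head and tail. $\mathbb{C}[\mathfrak{t}^{\oplus Q_1}]$ is the subalgebra generated by the diagonal entries of all $A_a$. *)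

theory Defs
  imports "HOL-Analysis.Analysis" "Jordan_Normal_Form.Matrix"
begin

text \<open>The generalized 2-Kronecker quiver K_{2,m1,m2}: its underlying graph is a cycle
on N = m1 + m2 + 2 vertices 0,...,N-1, with u = 0 and v = m1 + 1. The path
0,1,...,m1+1 has m1 intermediate vertices, the path m1+1,...,N-1,0 has m2.\<close>

definition nverts :: "nat \<Rightarrow> nat \<Rightarrow> nat" where
  "nverts m1 m2 = m1 + m2 + 2"

definition qtail :: "nat \<Rightarrow> nat \<Rightarrow> (nat \<Rightarrow> bool) \<Rightarrow> nat \<Rightarrow> nat" where
  "qtail m1 m2 ori k = (if ori k then k else (k + 1) mod nverts m1 m2)"

definition qhead :: "nat \<Rightarrow> nat \<Rightarrow> (nat \<Rightarrow> bool) \<Rightarrow> nat \<Rightarrow> nat" where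
  "qhead m1 m2 ori k = (if ori k then (k + 1) mod nverts m1 m2 else k)"

definition has_source :: "nat \<Rightarrow> nat \<Rightarrow> (nat \<Rightarrow> bool) \<Rightarrow> bool" where
  "has_source m1 m2 ori = (\<exists>x < nverts m1 m2. \<forall>k < nverts m1 m2. qhead m1 m2 ori k \<noteq> x)"

definition has_sink :: "nat \<Rightarrow> nat \<Rightarrow> (nat \<Rightarrow> bool) \<Rightarrow> bool" where
  "has_sink m1 m2 ori = (\<exists>x < nverts m1 m2. \<forall>k < nverts m1 m2. qtail m1 m2 ori k \<noteq> x)"

text \<open>Points of F Rep(K, beta) = b^{Q1}: one upper triangular n x n complex matrix
per arrow k < N (entries for k >= N are irrelevant junk).\<close>

definition FRep :: "nat \<Rightarrow> nat \<Rightarrow> nat \<Rightarrow> (nat \<Rightarrow> complex mat) set" where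
  "FRep m1 m2 n = {A. \<forall>k < nverts m1 m2. A k \<in> carrier_mat n n \<and> upper_triangular (A k)}"

inductive_set poly_funs :: "nat \<Rightarrow> nat \<Rightarrow> ((nat \<Rightarrow> complex mat) \<Rightarrow> complex) set"
  for N n where
  pf_const: "(\<lambda>A. c) \<in> poly_funs N n"
| pf_coord: "k < N \<Longrightarrow> i < n \<Longrightarrow> j < n \<Longrightarrow> (\<lambda>A. A k $$ (i, j)) \<in> poly_funs N n"
| pf_add: "f \<in> poly_funs N n \<Longrightarrow> g \<in> poly_funs N n \<Longrightarrow> (\<lambda>A. f A + g A) \<in> poly_funs N n"
| pf_mult: "f \<in> poly_funs N n \<Longrightarrow> g \<in> poly_funs N n \<Longrightarrow> (\<lambda>A. f A * g A) \<in> poly_funs N n"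

text \<open>C[t^{Q1}]: the C-algebra generated by the diagonal entries.\<close>

inductive_set diag_funs :: "nat \<Rightarrow> nat \<Rightarrow> ((nat \<Rightarrow> complex mat) \<Rightarrow> complex) set"
  for N n where
  df_const: "(\<lambda>A. c) \<in> diag_funs N n"
| df_coord: "k < N \<Longrightarrow> i < n \<Longrightarrow> (\<lambda>A. A k $$ (i, i)) \<in> diag_funs N n"
| df_add: "f \<in> diag_funs N n \<Longrightarrow> g \<in> diag_funs N n \<Longrightarrow> (\<lambda>A. f A + g A) \<in> diag_funs N n"
| df_mult: "f \<in> diag_funs N n \<Longrightarrow> g \<in> diag_funs N n \<Longrightarrow> (\<lambda>A. f A * g A) \<in> diag_funs N n"

definition unitri :: "nat \<Rightarrow> complex mat set" where
  "unitri n = {u. u \<in> carrier_mat n n \<and> upper_triangular u \<and> (\<forall>i < n. u $$ (i, i) = 1)}"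

definition mat_inv :: "nat \<Rightarrow> complex mat \<Rightarrow> complex mat" where
  "mat_inv n u = (THE v. v \<in> carrier_mat n n \<and> u * v = 1\<^sub>m n \<and> v * u = 1\<^sub>m n)"

definition uact :: "nat \<Rightarrow> nat \<Rightarrow> (nat \<Rightarrow> bool) \<Rightarrow> nat \<Rightarrow> (nat \<Rightarrow> complex mat)
    \<Rightarrow> (nat \<Rightarrow> complex mat) \<Rightarrow> (nat \<Rightarrow> complex mat)" where
  "uact m1 m2 ori n u A = (\<lambda>k. if k < nverts m1 m2
       then u (qhead m1 m2 ori k) * A k * mat_inv n (u (qtail m1 m2 ori k)) else A k)"

definition invariant_polys :: "nat \<Rightarrow> nat \<Rightarrow> (nat \<Rightarrow> bool) \<Rightarrow> nat
    \<Rightarrow> ((nat \<Rightarrow> complex mat) \<Rightarrow> complex) set" where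
  "invariant_polys m1 m2 ori n = {f \<in> poly_funs (nverts m1 m2) n.
     \<forall>u. (\<forall>x < nverts m1 m2. u x \<in> unitri n) \<longrightarrow>
       (\<forall>A \<in> FRep m1 m2 n. f (uact m1 m2 ori n u A) = f A)}"

end

theory Submission
  imports Defs "Jordan_Normal_Form.Determinant" "HOL-Computational_Algebra.Polynomial"
begin

text \<open>Diagonal entries are invariant, since U acts on each arrow by multiplying an upper
triangular matrix by unitriangular ones. Conversely, call a representation generic if all
diagonal entries are nonzero and, for i < j, the products around the cycle of the i-th and
j-th diagonal entries (taken along the arrow orientations) differ. Then a gauge u with
u_h A_k = diag(A_k) u_t can be found column by column: the unknown entries of column j satisfy
a twisted linear equation around the cycle, solvable exactly because the two cycle products
differ. So an invariant polynomial takes the same value at a generic A and at its diagonal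
part. On a line through an arbitrary point, both values are polynomials in the parameter
and all but finitely many points of the line are generic, hence the values agree everywhere.\<close>

lemma sum_eq_single:
  assumes "finite A" "i \<in> A" "\<And>k. k \<in> A \<Longrightarrow> k \<noteq> i \<Longrightarrow> g k = (0::'a::comm_monoid_add)"
  shows "sum g A = g i"
  using assms by (subst sum.remove[of A i]) (auto intro!: sum.neutral)

lemma upper_triangular_zero_entry:
  "A \<in> carrier_mat n n \<Longrightarrow> upper_triangular A \<Longrightarrow> j < i \<Longrightarrow> i < n \<Longrightarrow> A $$ (i,j) = 0"
  by (simp add: upper_triangularD)

lemma index_mult_mat_sum:
  assumes "A \<in> carrier_mat n n" "B \<in> carrier_mat n n" "i < n" "j < n"
  shows "(A * B) $$ (i,j) = (\<Sum>l<n. A $$ (i,l) * B $$ (l,j))"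
  using assms by (auto simp: scalar_prod_def lessThan_atLeast0 intro!: sum.cong)

lemma upper_triangular_mult:
  fixes A B :: "'a::comm_ring_1 mat"
  assumes A: "A \<in> carrier_mat n n" "upper_triangular A"
    and B: "B \<in> carrier_mat n n" "upper_triangular B"
  shows "upper_triangular (A * B)"
proof
  fix i j assume ji: "j < i" and "i < dim_row (A * B)"
  hence i: "i < n" using A by simp
  have "A $$ (i,l) * B $$ (l,j) = 0" if "l < n" for l
  proof (cases "l < i")
    case True thus ?thesis using upper_triangular_zero_entry[OF A, of l i] i by simp
  next
    case False thus ?thesis using upper_triangular_zero_entry[OF B, of j l] ji that by simp
  qed
  thus "(A * B) $$ (i,j) = 0"
    using index_mult_mat_sum[OF A(1) B(1) i] ji i by simp
qed

lemma index_mult_upper_triangular_diag: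
  fixes A B :: "'a::comm_ring_1 mat"
  assumes A: "A \<in> carrier_mat n n" "upper_triangular A"
    and B: "B \<in> carrier_mat n n" "upper_triangular B" and i: "i < n"
  shows "(A * B) $$ (i,i) = A $$ (i,i) * B $$ (i,i)"
proof -
  have "A $$ (i,l) * B $$ (l,i) = 0" if "l < n" "l \<noteq> i" for l
  proof (cases "l < i")
    case True thus ?thesis using upper_triangular_zero_entry[OF A, of l i] i by simp
  next
    case False thus ?thesis using upper_triangular_zero_entry[OF B, of i l] that by simp
  qed
  hence "(\<Sum>l<n. A $$ (i,l) * B $$ (l,i)) = A $$ (i,i) * B $$ (i,i)"
    using i by (intro sum_eq_single) auto
  thus ?thesis
    using index_mult_mat_sum[OF A(1) B(1) i i] by simp
qed

lemma unitriI:
  assumes "u \<in> carrier_mat n n" "upper_triangular u" "\<And>i. i < n \<Longrightarrow> u $$ (i,i) = 1"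
  shows "u \<in> unitri n"
  using assms unfolding unitri_def by blast

lemma unitriD:
  assumes "u \<in> unitri n"
  shows "u \<in> carrier_mat n n" "upper_triangular u" "\<And>i. i < n \<Longrightarrow> u $$ (i,i) = 1"
  using assms unfolding unitri_def by auto

lemma unitri_invertible:
  assumes "u \<in> unitri n"
  shows "\<exists>v. v \<in> carrier_mat n n \<and> u * v = 1\<^sub>m n \<and> v * u = 1\<^sub>m n"
proof -
  note u = unitriD[OF assms]
  have "diag_mat u = replicate n 1"
    using u by (intro nth_equalityI) (auto simp: diag_mat_def)
  hence "det u = 1"
    using det_upper_triangular[OF u(2,1)] by simp
  hence "u \<in> Units (ring_mat TYPE(complex) n undefined)"
    using det_non_zero_imp_unit[OF u(1)] by simp
  thus ?thesis unfolding Units_def ring_mat_def by auto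
qed

lemma mat_inv_inverse:
  assumes "u \<in> unitri n"
  shows "mat_inv n u \<in> carrier_mat n n" "u * mat_inv n u = 1\<^sub>m n" "mat_inv n u * u = 1\<^sub>m n"
proof -
  obtain v where v: "v \<in> carrier_mat n n" "u * v = 1\<^sub>m n" "v * u = 1\<^sub>m n"
    using unitri_invertible[OF assms] by blast
  have "w = v" if "w \<in> carrier_mat n n" "w * u = 1\<^sub>m n" for w
  proof -
    have "w = w * (u * v)" using v that by simp
    also have "\<dots> = (w * u) * v" using v that unitriD(1)[OF assms] by (metis assoc_mult_mat)
    finally show ?thesis using v that by simp
  qed
  hence "mat_inv n u = v"
    unfolding mat_inv_def using v by blast
  thus "mat_inv n u \<in> carrier_mat n n" "u * mat_inv n u = 1\<^sub>m n" "mat_inv n u * u = 1\<^sub>m n"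
    using v by simp_all
qed

lemma left_inverse_unitri:
  assumes u: "u \<in> unitri n" and V: "V \<in> carrier_mat n n" and Vu: "V * u = 1\<^sub>m n"
  shows "V \<in> unitri n"
proof -
  note u = unitriD[OF u]
  have Vu_entry: "V $$ (i,j) = (if i = j then 1 else 0) - (\<Sum>l\<in>{..<n}-{j}. V $$ (i,l) * u $$ (l,j))"
    if "i < n" "j < n" for i j
  proof -
    have "(if i = j then 1 else 0) = (\<Sum>l<n. V $$ (i,l) * u $$ (l,j))"
      using Vu that index_mult_mat_sum[OF V u(1) that] by simp
    also have "\<dots> = V $$ (i,j) + (\<Sum>l\<in>{..<n}-{j}. V $$ (i,l) * u $$ (l,j))"
      using that u(3) by (simp add: sum.remove[of _ j])
    finally show ?thesis by simp
  qed
  have lower: "\<forall>i. j < i \<and> i < n \<longrightarrow> V $$ (i,j) = 0" for j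
  proof (induction j rule: less_induct)
    case (less j)
    show ?case
    proof (intro allI impI)
      fix i assume ji: "j < i \<and> i < n"
      have "V $$ (i,l) * u $$ (l,j) = 0" if "l < n" "l \<noteq> j" for l
      proof (cases "l < j")
        case True thus ?thesis using less.IH[of l] ji by simp
      next
        case False thus ?thesis using upper_triangular_zero_entry[OF u(1,2), of j l] that by simp
      qed
      thus "V $$ (i,j) = 0" using Vu_entry[of i j] ji by (simp add: sum.neutral)
    qed
  qed
  have "V $$ (i,i) = 1" if i: "i < n" for i
  proof -
    have "V $$ (i,l) * u $$ (l,i) = 0" if "l < n" "l \<noteq> i" for l
    proof (cases "l < i")
      case True thus ?thesis using lower[of l] i by simp
    next
      case False thus ?thesis using upper_triangular_zero_entry[OF u(1,2), of i l] that by simp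
    qed
    thus ?thesis using Vu_entry[of i i] i by (simp add: sum.neutral)
  qed
  with lower V show ?thesis by (intro unitriI) auto
qed

lemma mat_inv_unitri: "u \<in> unitri n \<Longrightarrow> mat_inv n u \<in> unitri n"
  using left_inverse_unitri mat_inv_inverse by blast

lemma diag_unitri_conj:
  assumes u: "u \<in> unitri n" and v: "v \<in> unitri n"
    and A: "A \<in> carrier_mat n n" "upper_triangular A" and i: "i < n"
  shows "(u * A * v) $$ (i,i) = A $$ (i,i)"
proof -
  note u = unitriD[OF u] and v = unitriD[OF v]
  have uA: "u * A \<in> carrier_mat n n" "upper_triangular (u * A)"
    using upper_triangular_mult[OF u(1,2) A] u A by auto
  show ?thesis
    using index_mult_upper_triangular_diag[OF uA v(1,2) i]
      index_mult_upper_triangular_diag[OF u(1,2) A i] u(3) v(3) i by simp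
qed

definition cycle_prod :: "nat \<Rightarrow> (nat \<Rightarrow> bool) \<Rightarrow> (nat \<Rightarrow> 'a::comm_monoid_mult) \<Rightarrow> (nat \<Rightarrow> 'a) \<Rightarrow> 'a"
  where "cycle_prod N ori a b = (\<Prod>k<N. if ori k then a k else b k)"

fun affine_orbit :: "(nat \<Rightarrow> 'a::comm_ring_1) \<Rightarrow> (nat \<Rightarrow> 'a) \<Rightarrow> 'a \<Rightarrow> nat \<Rightarrow> 'a" where
  "affine_orbit c e x 0 = x"
| "affine_orbit c e x (Suc k) = c k * affine_orbit c e x k + e k"

lemma affine_orbit_eq: "affine_orbit c e x k = (\<Prod>l<k. c l) * x + affine_orbit c e 0 k"
  by (induction k) (simp_all add: algebra_simps)

lemma periodic_affine_recurrence:
  fixes c e :: "nat \<Rightarrow> 'a::field"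
  assumes "(\<Prod>k<N. c k) \<noteq> 1"
  shows "\<exists>s. s N = s 0 \<and> (\<forall>k. s (Suc k) = c k * s k + e k)"
proof -
  define x where "x = affine_orbit c e 0 N / (1 - (\<Prod>k<N. c k))"
  have "affine_orbit c e x N = x"
    using assms by (subst affine_orbit_eq) (simp add: x_def field_simps)
  thus ?thesis by (intro exI[of _ "affine_orbit c e x"]) simp
qed

lemma qhead_less: "k < nverts m1 m2 \<Longrightarrow> qhead m1 m2 ori k < nverts m1 m2"
  and qtail_less: "k < nverts m1 m2 \<Longrightarrow> qtail m1 m2 ori k < nverts m1 m2"
  unfolding qhead_def qtail_def by (auto simp: nverts_def)

lemma cycle_equations_solvable:
  fixes \<alpha> \<beta> r :: "nat \<Rightarrow> 'a::field"
  assumes nz: "\<forall>k<nverts m1 m2. \<alpha> k \<noteq> 0 \<and> \<beta> k \<noteq> 0"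
    and distinct: "cycle_prod (nverts m1 m2) ori \<alpha> \<beta> \<noteq> cycle_prod (nverts m1 m2) ori \<beta> \<alpha>"
  shows "\<exists>s. \<forall>k<nverts m1 m2. \<beta> k * s (qhead m1 m2 ori k) - \<alpha> k * s (qtail m1 m2 ori k) = r k"
proof -
  define N where "N = nverts m1 m2"
  define c where "c k = (if ori k then \<alpha> k / \<beta> k else \<beta> k / \<alpha> k)" for k
  define e where "e k = (if ori k then r k / \<beta> k else - r k / \<alpha> k)" for k
  have "(\<Prod>k<N. c k) = cycle_prod N ori \<alpha> \<beta> / cycle_prod N ori \<beta> \<alpha>"
    unfolding c_def cycle_prod_def by (subst prod_dividef[symmetric]) (auto intro!: prod.cong)
  moreover have "cycle_prod N ori \<beta> \<alpha> \<noteq> 0"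
    using nz unfolding cycle_prod_def N_def by (auto simp: prod_zero_iff)
  ultimately have "(\<Prod>k<N. c k) \<noteq> 1"
    using distinct unfolding N_def by simp
  then obtain s where period: "s N = s 0" and step: "\<And>k. s (Suc k) = c k * s k + e k"
    using periodic_affine_recurrence by blast
  have wrap: "s ((k + 1) mod N) = s (Suc k)" if "k < N" for k
    using that period by (cases "k + 1 = N") simp_all
  show ?thesis
  proof (intro exI[of _ s] allI impI)
    fix k assume k: "k < nverts m1 m2"
    hence "\<alpha> k \<noteq> 0" "\<beta> k \<noteq> 0" using nz by auto
    thus "\<beta> k * s (qhead m1 m2 ori k) - \<alpha> k * s (qtail m1 m2 ori k) = r k"
      using wrap[of k] k unfolding qhead_def qtail_def N_def step c_def e_def
      by (cases "ori k") (simp_all add: field_simps)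
  qed
qed

definition generic_rep :: "nat \<Rightarrow> nat \<Rightarrow> (nat \<Rightarrow> bool) \<Rightarrow> nat \<Rightarrow> (nat \<Rightarrow> complex mat) \<Rightarrow> bool"
  where "generic_rep m1 m2 ori n A \<longleftrightarrow>
    (\<forall>k<nverts m1 m2. \<forall>i<n. A k $$ (i,i) \<noteq> 0) \<and>
    (\<forall>i j. i < j \<longrightarrow> j < n \<longrightarrow>
       cycle_prod (nverts m1 m2) ori (\<lambda>k. A k $$ (i,i)) (\<lambda>k. A k $$ (j,j))
     \<noteq> cycle_prod (nverts m1 m2) ori (\<lambda>k. A k $$ (j,j)) (\<lambda>k. A k $$ (i,i)))"

definition unitri_of :: "nat \<Rightarrow> (nat \<Rightarrow> nat \<Rightarrow> complex) \<Rightarrow> complex mat" where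
  "unitri_of n s = mat n n (\<lambda>(i,j). if i = j then 1 else if i < j then s i j else 0)"

lemma unitri_of_unitri: "unitri_of n s \<in> unitri n"
  by (intro unitriI) (auto simp: unitri_of_def)

lemma index_unitri_of_cong:
  "i < n \<Longrightarrow> l < n \<Longrightarrow> (i < l \<Longrightarrow> s i l = s' i l) \<Longrightarrow> unitri_of n s $$ (i,l) = unitri_of n s' $$ (i,l)"
  by (simp add: unitri_of_def)

lemma index_unitri_of_mult:
  assumes A: "A \<in> carrier_mat n n" "upper_triangular A" and ij: "i < j" "j < n"
  shows "(unitri_of n s * A) $$ (i,j)
       = (\<Sum>l<j. unitri_of n s $$ (i,l) * A $$ (l,j)) + s i j * A $$ (j,j)"
proof -
  have u: "unitri_of n s \<in> carrier_mat n n" by (simp add: unitri_of_def)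
  have "(unitri_of n s * A) $$ (i,j) = (\<Sum>l<n. unitri_of n s $$ (i,l) * A $$ (l,j))"
    using index_mult_mat_sum[OF u A(1)] ij by simp
  also have "\<dots> = (\<Sum>l<Suc j. unitri_of n s $$ (i,l) * A $$ (l,j))"
    using ij upper_triangular_zero_entry[OF A, of j] by (intro sum.mono_neutral_right) auto
  finally show ?thesis using ij by (simp add: unitri_of_def)
qed

text \<open>Entry (i,j) of u_h A_k only involves columns \<open>\<le> j\<close> of u_h, so column j of
the gauge is determined by the earlier columns through a cycle equation.\<close>

lemma unitri_gauge_columns:
  assumes A: "A \<in> FRep m1 m2 n" and gen: "generic_rep m1 m2 ori n A"
  shows "\<exists>s. \<forall>k<nverts m1 m2. \<forall>i j. i < j \<and> j < m \<and> j < n \<longrightarrow>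
    (unitri_of n (s (qhead m1 m2 ori k)) * A k) $$ (i,j) = A k $$ (i,i) * s (qtail m1 m2 ori k) i j"
proof (induction m)
  case (Suc m)
  then obtain s where s: "\<forall>k<nverts m1 m2. \<forall>i j. i < j \<and> j < m \<and> j < n \<longrightarrow>
    (unitri_of n (s (qhead m1 m2 ori k)) * A k) $$ (i,j) = A k $$ (i,i) * s (qtail m1 m2 ori k) i j"
    by blast
  define r where "r i k = - (\<Sum>l<m. unitri_of n (s (qhead m1 m2 ori k)) $$ (i,l) * A k $$ (l,m))"
    for i k
  have "\<exists>v. \<forall>k<nverts m1 m2. A k $$ (m,m) * v (qhead m1 m2 ori k) - A k $$ (i,i) * v (qtail m1 m2 ori k)
     = r i k" if "i < m" "m < n" for i
    using gen that unfolding generic_rep_def by (intro cycle_equations_solvable) auto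
  then obtain sol where sol: "\<And>i k. i < m \<Longrightarrow> m < n \<Longrightarrow> k < nverts m1 m2 \<Longrightarrow>
      A k $$ (m,m) * sol i (qhead m1 m2 ori k) - A k $$ (i,i) * sol i (qtail m1 m2 ori k) = r i k"
    by metis
  define s' where "s' x i j = (if j = m then sol i x else s x i j)" for x i j
  have lower_cols: "(\<Sum>l<j. unitri_of n (s' x) $$ (i,l) * A k $$ (l,j))
      = (\<Sum>l<j. unitri_of n (s x) $$ (i,l) * A k $$ (l,j))" if "i < j" "j \<le> m" "j < n" for x k i j
    using that by (intro sum.cong refl arg_cong2[where f = "(*)"] index_unitri_of_cong) (auto simp: s'_def)
  show ?case
  proof (intro exI[of _ s'] allI impI)
    fix k i j assume k: "k < nverts m1 m2" and ij: "i < j \<and> j < Suc m \<and> j < n"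
    have Ak: "A k \<in> carrier_mat n n" "upper_triangular (A k)" using A k unfolding FRep_def by auto
    show "(unitri_of n (s' (qhead m1 m2 ori k)) * A k) $$ (i,j) = A k $$ (i,i) * s' (qtail m1 m2 ori k) i j"
    proof (cases "j = m")
      case True
      thus ?thesis using sol[of i k] k ij lower_cols index_unitri_of_mult[OF Ak]
        unfolding r_def by (simp add: s'_def algebra_simps)
    next
      case False
      hence "(unitri_of n (s (qhead m1 m2 ori k)) * A k) $$ (i,j) = A k $$ (i,i) * s (qtail m1 m2 ori k) i j"
        using s k ij by simp
      thus ?thesis using ij lower_cols[of i j] index_unitri_of_mult[OF Ak, of i j] False
        by (simp add: s'_def)
    qed
  qed
qed simp

definition diag_part :: "nat \<Rightarrow> (nat \<Rightarrow> complex mat) \<Rightarrow> nat \<Rightarrow> complex mat" where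
  "diag_part n A = (\<lambda>k. mat_diag n (\<lambda>i. A k $$ (i,i)))"

lemma generic_rep_conj_diag_part:
  assumes A: "A \<in> FRep m1 m2 n" and gen: "generic_rep m1 m2 ori n A"
  shows "\<exists>u. (\<forall>x<nverts m1 m2. u x \<in> unitri n) \<and>
    (\<forall>k<nverts m1 m2. uact m1 m2 ori n u A k = diag_part n A k)"
proof -
  obtain s where s: "\<forall>k<nverts m1 m2. \<forall>i j. i < j \<and> j < n \<longrightarrow>
    (unitri_of n (s (qhead m1 m2 ori k)) * A k) $$ (i,j) = A k $$ (i,i) * s (qtail m1 m2 ori k) i j"
    using unitri_gauge_columns[OF A gen, of n] by auto
  define u where "u x = unitri_of n (s x)" for x
  have u: "u x \<in> unitri n" for x unfolding u_def by (rule unitri_of_unitri)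
  show ?thesis
  proof (intro exI[of _ u] conjI allI impI)
    fix k assume k: "k < nverts m1 m2"
    define h where "h = qhead m1 m2 ori k"
    define t where "t = qtail m1 m2 ori k"
    note uh = unitriD[OF u[of h]] and ut = unitriD[OF u[of t]]
    have Ak: "A k \<in> carrier_mat n n" "upper_triangular (A k)" using A k unfolding FRep_def by auto
    have D: "diag_part n A k \<in> carrier_mat n n" by (simp add: diag_part_def)
    have gauge: "u h * A k = diag_part n A k * u t"
    proof (rule eq_matI)
      fix i j assume "i < dim_row (diag_part n A k * u t)" "j < dim_col (diag_part n A k * u t)"
      hence i: "i < n" and j: "j < n" using D ut by auto
      have rhs: "(diag_part n A k * u t) $$ (i,j) = A k $$ (i,i) * u t $$ (i,j)"
        using i j ut(1) by (simp add: diag_part_def mat_diag_mult_left)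
      consider "i < j" | "i = j" | "j < i" by linarith
      thus "(u h * A k) $$ (i,j) = (diag_part n A k * u t) $$ (i,j)"
      proof cases
        case 1 thus ?thesis using s k j rhs unfolding u_def h_def t_def by (simp add: unitri_of_def)
      next
        case 2 thus ?thesis using index_mult_upper_triangular_diag[OF uh(1,2) Ak i] uh(3) ut(3) i rhs
          by simp
      next
        case 3 thus ?thesis
          using upper_triangular_zero_entry[OF mult_carrier_mat[OF uh(1) Ak(1)]
              upper_triangular_mult[OF uh(1,2) Ak]] upper_triangular_zero_entry[OF ut(1,2)] i rhs
          by simp
      qed
    qed (use D uh ut Ak in auto)
    have "u h * A k * mat_inv n (u t) = diag_part n A k * (u t * mat_inv n (u t))"
      using gauge assoc_mult_mat[OF D ut(1) mat_inv_inverse(1)[OF u]] by simp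
    also have "\<dots> = diag_part n A k" using mat_inv_inverse(2)[OF u] D by simp
    finally show "uact m1 m2 ori n u A k = diag_part n A k"
      unfolding uact_def h_def t_def using k by simp
  qed (rule u)
qed

lemma poly_funs_cong:
  assumes "f \<in> poly_funs N n" "\<And>k i j. k < N \<Longrightarrow> i < n \<Longrightarrow> j < n \<Longrightarrow> B k $$ (i,j) = C k $$ (i,j)"
  shows "f B = f C"
  using assms by (induction rule: poly_funs.induct) auto

lemma poly_funs_polynomial_family:
  assumes "f \<in> poly_funs N n"
    and "\<And>k i j. k < N \<Longrightarrow> i < n \<Longrightarrow> j < n \<Longrightarrow> \<exists>q. \<forall>t. B t k $$ (i,j) = poly q t"
  shows "\<exists>p. \<forall>t. f (B t) = poly p t"
  using assms
proof (induction rule: poly_funs.induct)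
  case (pf_const c) show ?case by (intro exI[of _ "[:c:]"]) simp
next
  case (pf_add f g)
  then obtain p q where "\<forall>t. f (B t) = poly p t" "\<forall>t. g (B t) = poly q t" by blast
  thus ?case by (intro exI[of _ "p + q"]) simp
next
  case (pf_mult f g)
  then obtain p q where "\<forall>t. f (B t) = poly p t" "\<forall>t. g (B t) = poly q t" by blast
  thus ?case by (intro exI[of _ "p * q"]) simp
qed simp

lemma poly_funs_diag_part:
  assumes "f \<in> poly_funs N n"
  shows "\<exists>h \<in> diag_funs N n. \<forall>A. f (diag_part n A) = h A"
  using assms
proof (induction rule: poly_funs.induct)
  case (pf_const c) show ?case by (intro bexI[of _ "\<lambda>A. c"]) (auto intro: diag_funs.intros)
next
  case (pf_coord k i j)
  show ?case
  proof (cases "i = j")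
    case True
    thus ?thesis using pf_coord
      by (intro bexI[of _ "\<lambda>A. A k $$ (i,i)"]) (auto intro: diag_funs.intros simp: diag_part_def mat_diag_def)
  next
    case False
    thus ?thesis using pf_coord
      by (intro bexI[of _ "\<lambda>A. 0"]) (auto intro: diag_funs.intros simp: diag_part_def mat_diag_def)
  qed
next
  case (pf_add f g)
  then obtain p q where "p \<in> diag_funs N n" "q \<in> diag_funs N n"
    "\<forall>A. f (diag_part n A) = p A" "\<forall>A. g (diag_part n A) = q A" by blast
  thus ?case by (intro bexI[of _ "\<lambda>A. p A + q A"]) (auto intro: diag_funs.intros)
next
  case (pf_mult f g)
  then obtain p q where "p \<in> diag_funs N n" "q \<in> diag_funs N n"
    "\<forall>A. f (diag_part n A) = p A" "\<forall>A. g (diag_part n A) = q A" by blast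
  thus ?case by (intro bexI[of _ "\<lambda>A. p A * q A"]) (auto intro: diag_funs.intros)
qed

lemma diag_funs_poly_funs: "f \<in> diag_funs N n \<Longrightarrow> f \<in> poly_funs N n"
  by (induction rule: diag_funs.induct) (auto intro: poly_funs.intros)

lemma diag_funs_cong:
  assumes "f \<in> diag_funs N n" "\<And>k i. k < N \<Longrightarrow> i < n \<Longrightarrow> B k $$ (i,i) = C k $$ (i,i)"
  shows "f B = f C"
  using assms by (induction rule: diag_funs.induct) auto

lemma uact_diag_entry:
  assumes A: "A \<in> FRep m1 m2 n" and u: "\<forall>x<nverts m1 m2. u x \<in> unitri n"
    and k: "k < nverts m1 m2" and i: "i < n"
  shows "uact m1 m2 ori n u A k $$ (i,i) = A k $$ (i,i)"
proof -
  have "u (qhead m1 m2 ori k) \<in> unitri n" "mat_inv n (u (qtail m1 m2 ori k)) \<in> unitri n"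
    using u k qhead_less qtail_less mat_inv_unitri by auto
  moreover have "A k \<in> carrier_mat n n" "upper_triangular (A k)"
    using A k unfolding FRep_def by auto
  ultimately show ?thesis
    using diag_unitri_conj i k unfolding uact_def by simp
qed

lemma diag_funs_invariant: "diag_funs (nverts m1 m2) n \<subseteq> invariant_polys m1 m2 ori n"
proof
  fix f assume f: "f \<in> diag_funs (nverts m1 m2) n"
  have "f (uact m1 m2 ori n u A) = f A"
    if "\<forall>x<nverts m1 m2. u x \<in> unitri n" "A \<in> FRep m1 m2 n" for u A
    using diag_funs_cong[OF f] uact_diag_entry[OF that(2,1)] by blast
  thus "f \<in> invariant_polys m1 m2 ori n"
    unfolding invariant_polys_def using diag_funs_poly_funs[OF f] by blast
qed

lemma invariant_poly_eq_on_generic: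
  assumes f: "f \<in> invariant_polys m1 m2 ori n"
    and A: "A \<in> FRep m1 m2 n" and gen: "generic_rep m1 m2 ori n A"
  shows "f A = f (diag_part n A)"
proof -
  obtain u where u: "\<forall>x<nverts m1 m2. u x \<in> unitri n"
    and diag: "\<forall>k<nverts m1 m2. uact m1 m2 ori n u A k = diag_part n A k"
    using generic_rep_conj_diag_part[OF A gen] by blast
  have "f A = f (uact m1 m2 ori n u A)"
    using f A u unfolding invariant_polys_def by simp
  also have "\<dots> = f (diag_part n A)"
    using f diag unfolding invariant_polys_def by (auto intro: poly_funs_cong)
  finally show ?thesis .
qed

lemma coeff_prod_linear:
  fixes a c :: "nat \<Rightarrow> 'a::idom"
  assumes "\<forall>k<N. c k \<noteq> 0"
  shows "coeff (\<Prod>k<N. [:a k, c k:]) N = (\<Prod>k<N. c k)"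
proof -
  have "degree (\<Prod>k<N. [:a k, c k:]) = N"
    using assms by (subst degree_prod_eq_sum_degree) auto
  moreover have "lead_coeff (\<Prod>k<N. [:a k, c k:]) = (\<Prod>k<N. c k)"
    using assms by (simp add: lead_coeff_prod)
  ultimately show ?thesis by simp
qed

lemma cycle_prod_affine:
  "cycle_prod N ori (\<lambda>k. a k + t * c k) (\<lambda>k. b k + t * d k)
   = poly (\<Prod>k<N. [:if ori k then a k else b k, if ori k then c k else d k:]) t"
  by (auto simp: cycle_prod_def poly_prod intro!: prod.cong)

lemma poly_eq_if_eq_cofinite:
  fixes p q :: "'a::{idom,ring_char_0} poly"
  assumes "finite S" "\<And>t. t \<notin> S \<Longrightarrow> poly p t = poly q t"
  shows "p = q"
proof (rule ccontr)
  assume "p \<noteq> q"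
  hence "finite {t. poly (p - q) t = 0}" by (intro poly_roots_finite) simp
  moreover have "UNIV \<subseteq> S \<union> {t. poly (p - q) t = 0}" using assms(2) by auto
  ultimately show False
    using assms(1) infinite_UNIV_char_0 by (metis finite_Un finite_subset)
qed

text \<open>Only arrow 0 separates the indices: with uniform weights the leading coefficients of
the two cycle products would coincide whenever the cycle has as many forward as backward
arrows.\<close>

definition perturb_weight :: "nat \<Rightarrow> nat \<Rightarrow> complex" where
  "perturb_weight k i = (if k = 0 then of_nat (Suc i) else 1)"

definition perturb :: "nat \<Rightarrow> (nat \<Rightarrow> complex mat) \<Rightarrow> complex \<Rightarrow> nat \<Rightarrow> complex mat" where
  "perturb n A t = (\<lambda>k. mat n n (\<lambda>(i,j). A k $$ (i,j) + (if i = j then t * perturb_weight k i else 0)))"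

lemma perturb_weight_nonzero: "perturb_weight k i \<noteq> 0"
  unfolding perturb_weight_def by (simp del: of_nat_Suc)

lemma cycle_prod_perturb_weight:
  assumes "0 < N"
  shows "cycle_prod N ori (\<lambda>k. perturb_weight k i) (\<lambda>k. perturb_weight k j)
       = of_nat (Suc (if ori 0 then i else j))"
proof -
  obtain M where N: "N = Suc M" using assms gr0_implies_Suc by blast
  have "cycle_prod N ori (\<lambda>k. perturb_weight k i) (\<lambda>k. perturb_weight k j)
      = (if ori 0 then perturb_weight 0 i else perturb_weight 0 j) *
        (\<Prod>k<M. if ori (Suc k) then perturb_weight (Suc k) i else perturb_weight (Suc k) j)"
    unfolding cycle_prod_def N by (rule prod.lessThan_Suc_shift)
  also have "\<dots> = of_nat (Suc (if ori 0 then i else j))"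
    by (subst prod.neutral) (auto simp: perturb_weight_def simp del: of_nat_Suc)
  finally show ?thesis .
qed

lemma perturb_FRep: "A \<in> FRep m1 m2 n \<Longrightarrow> perturb n A t \<in> FRep m1 m2 n"
  unfolding FRep_def perturb_def by (auto simp: upper_triangular_def)

lemma finite_nongeneric_perturb: "finite {t. \<not> generic_rep m1 m2 ori n (perturb n A t)}"
proof -
  define N where "N = nverts m1 m2"
  define p where "p i j = (\<Prod>k<N. [:if ori k then A k $$ (i,i) else A k $$ (j,j),
      if ori k then perturb_weight k i else perturb_weight k j:])" for i j
  have cycle_prod_poly: "cycle_prod N ori (\<lambda>k. perturb n A t k $$ (i,i)) (\<lambda>k. perturb n A t k $$ (j,j))
      = poly (p i j) t" if "i < n" "j < n" for i j t
    using that cycle_prod_affine unfolding p_def perturb_def by (simp add: mult.commute)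
  have "coeff (p i j) N = cycle_prod N ori (\<lambda>k. perturb_weight k i) (\<lambda>k. perturb_weight k j)" for i j
    unfolding p_def cycle_prod_def by (rule coeff_prod_linear) (simp add: perturb_weight_nonzero)
  hence "coeff (p i j) N = of_nat (Suc (if ori 0 then i else j))" for i j
    using cycle_prod_perturb_weight[of N] by (simp add: N_def nverts_def)
  hence "coeff (p i j - p j i) N \<noteq> 0" if "i \<noteq> j" for i j
    using that by simp
  hence diff_nonzero: "p i j - p j i \<noteq> 0" if "i \<noteq> j" for i j
    using that by (metis coeff_0)
  have roots: "finite {t. i \<noteq> j \<and> poly (p i j - p j i) t = 0}" for i j
  proof (cases "i = j")
    case False
    thus ?thesis using poly_roots_finite[OF diff_nonzero[OF False]] by simp
  qed simp
  have zeros: "finite {t. perturb n A t k $$ (i,i) = 0}" if "i < n" for k i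
  proof -
    have "{t. perturb n A t k $$ (i,i) = 0} = {t. poly [:A k $$ (i,i), perturb_weight k i:] t = 0}"
      using that by (simp add: perturb_def mult.commute)
    thus ?thesis using poly_roots_finite perturb_weight_nonzero by (metis pCons_eq_0_iff)
  qed
  have "{t. \<not> generic_rep m1 m2 ori n (perturb n A t)}
      \<subseteq> (\<Union>k<N. \<Union>i<n. {t. perturb n A t k $$ (i,i) = 0})
      \<union> (\<Union>i<n. \<Union>j<n. {t. i \<noteq> j \<and> poly (p i j - p j i) t = 0})"
  proof
    fix t assume "t \<in> {t. \<not> generic_rep m1 m2 ori n (perturb n A t)}"
    then consider (zero) k i where "k < N" "i < n" "perturb n A t k $$ (i,i) = 0"
      | (cycle) i j where "i < j" "j < n"
        "cycle_prod N ori (\<lambda>k. perturb n A t k $$ (i,i)) (\<lambda>k. perturb n A t k $$ (j,j))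
       = cycle_prod N ori (\<lambda>k. perturb n A t k $$ (j,j)) (\<lambda>k. perturb n A t k $$ (i,i))"
      unfolding generic_rep_def N_def by blast
    thus "t \<in> (\<Union>k<N. \<Union>i<n. {t. perturb n A t k $$ (i,i) = 0})
      \<union> (\<Union>i<n. \<Union>j<n. {t. i \<noteq> j \<and> poly (p i j - p j i) t = 0})"
    proof cases
      case zero thus ?thesis by blast
    next
      case cycle
      hence "i < n" by simp
      hence "i \<noteq> j \<and> poly (p i j - p j i) t = 0"
        using cycle cycle_prod_poly[of i j t] cycle_prod_poly[of j i t] by simp
      thus ?thesis using cycle \<open>i < n\<close> by blast
    qed
  qed
  moreover have "finite ((\<Union>k<N. \<Union>i<n. {t. perturb n A t k $$ (i,i) = 0})
      \<union> (\<Union>i<n. \<Union>j<n. {t. i \<noteq> j \<and> poly (p i j - p j i) t = 0}))"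
    using zeros roots by simp
  ultimately show ?thesis by (rule finite_subset)
qed

lemma invariant_poly_eq_diag_part:
  assumes f: "f \<in> invariant_polys m1 m2 ori n" and A: "A \<in> FRep m1 m2 n"
  shows "f A = f (diag_part n A)"
proof -
  have fp: "f \<in> poly_funs (nverts m1 m2) n" using f unfolding invariant_polys_def by simp
  have "\<exists>p. \<forall>t. f (perturb n A t) = poly p t"
  proof (rule poly_funs_polynomial_family[OF fp])
    fix k i j assume "i < n" "j < n"
    thus "\<exists>q. \<forall>t. perturb n A t k $$ (i,j) = poly q t"
      by (intro exI[of _ "[:A k $$ (i,j), if i = j then perturb_weight k i else 0:]"])
        (simp add: perturb_def mult.commute)
  qed
  then obtain p where p: "\<forall>t. f (perturb n A t) = poly p t" by blast
  have "\<exists>q. \<forall>t. f (diag_part n (perturb n A t)) = poly q t"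
  proof (rule poly_funs_polynomial_family[OF fp])
    fix k i j assume "i < n" "j < n"
    thus "\<exists>q. \<forall>t. diag_part n (perturb n A t) k $$ (i,j) = poly q t"
      by (intro exI[of _ "if i = j then [:A k $$ (i,i), perturb_weight k i:] else 0"])
        (simp add: perturb_def diag_part_def mat_diag_def mult.commute)
  qed
  then obtain q where q: "\<forall>t. f (diag_part n (perturb n A t)) = poly q t" by blast
  have "p = q"
    using finite_nongeneric_perturb
  proof (rule poly_eq_if_eq_cofinite)
    fix t assume "t \<notin> {t. \<not> generic_rep m1 m2 ori n (perturb n A t)}"
    thus "poly p t = poly q t"
      using invariant_poly_eq_on_generic[OF f perturb_FRep[OF A]] p q by simp
  qed
  hence "f (perturb n A 0) = f (diag_part n (perturb n A 0))" using p q by simp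
  moreover have "f (perturb n A 0) = f A"
    by (rule poly_funs_cong[OF fp]) (simp add: perturb_def)
  moreover have "f (diag_part n (perturb n A 0)) = f (diag_part n A)"
    by (rule poly_funs_cong[OF fp]) (simp add: perturb_def diag_part_def mat_diag_def)
  ultimately show ?thesis by simp
qed

theorem mainTheorem5:
  fixes m1 m2 n :: nat and ori :: "nat \<Rightarrow> bool"
  assumes "has_source m1 m2 ori" and "has_sink m1 m2 ori"
  shows "(\<lambda>f. restrict f (FRep m1 m2 n)) ` invariant_polys m1 m2 ori n
       = (\<lambda>f. restrict f (FRep m1 m2 n)) ` diag_funs (nverts m1 m2) n"
proof
  show "(\<lambda>f. restrict f (FRep m1 m2 n)) ` invariant_polys m1 m2 ori n
     \<subseteq> (\<lambda>f. restrict f (FRep m1 m2 n)) ` diag_funs (nverts m1 m2) n"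
  proof (rule image_subsetI)
    fix f assume f: "f \<in> invariant_polys m1 m2 ori n"
    then obtain h where h: "h \<in> diag_funs (nverts m1 m2) n" "\<forall>A. f (diag_part n A) = h A"
      using poly_funs_diag_part unfolding invariant_polys_def by blast
    have "restrict f (FRep m1 m2 n) = restrict h (FRep m1 m2 n)"
      using invariant_poly_eq_diag_part[OF f] h(2) by (auto simp: restrict_def)
    thus "restrict f (FRep m1 m2 n) \<in> (\<lambda>f. restrict f (FRep m1 m2 n)) ` diag_funs (nverts m1 m2) n"
      using h(1) by blast
  qed
  show "(\<lambda>f. restrict f (FRep m1 m2 n)) ` diag_funs (nverts m1 m2) n
     \<subseteq> (\<lambda>f. restrict f (FRep m1 m2 n)) ` invariant_polys m1 m2 ori n"
    using diag_funs_invariant by (rule image_mono)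
qed

end
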